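(* Consider the control system $\dot y(t)=f(y(t),u(t))$ a.e., $u(t)\in\mathcal U$ a.e., $y(0)=x$, where $\mathcal U\subset\mathbb R^M$ is nonempty and compact, and assume: (i) the set $\{f(x,u):u\in\mathcal U\}$ is convex for every $x\in\mathbb R^N$; (ii) $f:\mathbb R^N\times\mathcal U\to\mathbb R^N$ is continuous and $\|f(x,u)-f(y,u)\|\le L\|x-y\|$ for all $x,y\in\mathbb R^N$, $u\in\mathcal U$, for some $L>0$; moreover the differential $D_xf$ of $f$ with respect to $x$ exists everywhere, is continuous in $(x,u)$, and satisfies $\|D_xf(x,u)-D_xf(y,u)\|\le L_1\|x-y\|$ for all $x,y\in\mathbb R^N$, $u\in\mathcal U$, for some $L_1>0$. Let $x\in\mathbb R^N\setminus\{0\}$ and let $T(x)$ be the minimum time to reach the origin from $x$. Assume there is a neighborhood $\mathcal V$ of $x$ such that: (1) $T$ is finite and continuous in $\mathcal V$; (2) every $y\in\mathcal V$ is an optimal point; (3) for every $y\in\mathcal V$ the optimal control steering $y$ to the origin is unique and bang-bang with finitely many switchings; (4) there exists $r>T(x)$ such that $\mathcal R_t$ has locally positive reach for all $t<r$. Let $\zeta\in N_{\mathcal R_{T(x)}}(x)$. Then (a) $h(x,\zeta)\le 0$, and (b) $(\zeta,h(x,\zeta))\in N_{\mathrm{epi}(T)}(x,T(x))$.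
   Context: Admissible controls are measurable $u:[0,\infty)\to\mathcal U$; $y^{x,u}$ denotes the (unique Carathéodory) trajectory from $x$ with control $u$. The minimum time is $T(x)=\inf\{\theta\ge0: y^{x,u}(\theta)=0 \text{ for some admissible } u\}$, and $\mathcal R_t=\{x: T(x)\le t\}$. The minimized Hamiltonian is $h(x,p)=\min_{u\in\mathcal U}\langle p,f(x,u)\rangle$. A point $x\neq0$ is an optimal point if there exist $x_1$ with $T(x_1)>T(x)$ and a control $u$ such that $y^{x_1,u}$ steers $x_1$ to the origin in the optimal time $T(x_1)$ and $y^{x_1,u}(T(x_1)-T(x))=x$. For a closed set $K$ and $x\in K$, $v\in N_K(x)$ (proximal normal cone) iff there is $\sigma\ge0$ with $\langle v,y-x\rangle\le\sigma\|y-x\|^2$ for all $y\in K$. A locally closed set $K$ has locally positive reach if there is a continuous $\varphi:K\to[0,\infty)$ with $\langle v,y-x\rangle\le\varphi(x)\|v\|\|y-x\|^2$ for all $x,y\in K$, $v\in N_K(x)$. $\mathrm{epi}(T)=\{(y,\beta):\beta\ge T(y)\}$. A bang-bang control with finitely many switchings is piecewise constant with values in the extreme points of $\mathcal U$ and finitely many jumps. *)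

theory Defs
  imports "HOL-Analysis.Analysis"
begin

definition admissible_control :: "(real ^ 'm) set \<Rightarrow> (real \<Rightarrow> real ^ 'm) \<Rightarrow> bool" where
  "admissible_control U u \<longleftrightarrow>
     u \<in> borel_measurable (lebesgue_on {0..}) \<and> (\<forall>t\<ge>0. u t \<in> U)"

text \<open>Caratheodory trajectory on [0,\<infinity>) from x with control u (integral form).\<close>
definition is_trajectory ::
  "(real ^ 'n \<Rightarrow> real ^ 'm \<Rightarrow> real ^ 'n) \<Rightarrow> real ^ 'n \<Rightarrow> (real \<Rightarrow> real ^ 'm) \<Rightarrow> (real \<Rightarrow> real ^ 'n) \<Rightarrow> bool" where
  "is_trajectory f x u y \<longleftrightarrow>
     (\<forall>t\<ge>0. (\<lambda>s. f (y s) (u s)) integrable_on {0..t} \<and>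
             y t = x + integral {0..t} (\<lambda>s. f (y s) (u s)))"

definition min_time ::
  "(real ^ 'n \<Rightarrow> real ^ 'm \<Rightarrow> real ^ 'n) \<Rightarrow> (real ^ 'm) set \<Rightarrow> real ^ 'n \<Rightarrow> ereal" where
  "min_time f U x = Inf (ereal ` {\<theta>. \<theta> \<ge> 0 \<and>
      (\<exists>u y. admissible_control U u \<and> is_trajectory f x u y \<and> y \<theta> = 0)})"

definition reach_set ::
  "(real ^ 'n \<Rightarrow> real ^ 'm \<Rightarrow> real ^ 'n) \<Rightarrow> (real ^ 'm) set \<Rightarrow> ereal \<Rightarrow> (real ^ 'n) set" where
  "reach_set f U t = {x. min_time f U x \<le> t}"

definition min_hamiltonian ::
  "(real ^ 'n \<Rightarrow> real ^ 'm \<Rightarrow> real ^ 'n) \<Rightarrow> (real ^ 'm) set \<Rightarrow> real ^ 'n \<Rightarrow> real ^ 'n \<Rightarrow> real" where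
  "min_hamiltonian f U x p = Inf ((\<lambda>u. p \<bullet> f x u) ` U)"

definition optimal_control ::
  "(real ^ 'n \<Rightarrow> real ^ 'm \<Rightarrow> real ^ 'n) \<Rightarrow> (real ^ 'm) set \<Rightarrow> real ^ 'n \<Rightarrow> (real \<Rightarrow> real ^ 'm) \<Rightarrow> bool" where
  "optimal_control f U x u \<longleftrightarrow> admissible_control U u \<and>
     (\<exists>t y. min_time f U x = ereal t \<and> is_trajectory f x u y \<and> y t = 0)"

definition optimal_point ::
  "(real ^ 'n \<Rightarrow> real ^ 'm \<Rightarrow> real ^ 'n) \<Rightarrow> (real ^ 'm) set \<Rightarrow> real ^ 'n \<Rightarrow> bool" where
  "optimal_point f U x \<longleftrightarrow> x \<noteq> 0 \<and>
     (\<exists>x1 u y t1. min_time f U x1 = ereal t1 \<and> min_time f U x1 > min_time f U x \<and>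
        admissible_control U u \<and> is_trajectory f x1 u y \<and> y t1 = 0 \<and>
        y (t1 - real_of_ereal (min_time f U x)) = x)"

definition bang_bang_on :: "(real ^ 'm) set \<Rightarrow> real \<Rightarrow> (real \<Rightarrow> real ^ 'm) \<Rightarrow> bool" where
  "bang_bang_on U T u \<longleftrightarrow> (\<exists>S. finite S \<and>
     (\<forall>t\<in>{0..T} - S. u t extreme_point_of U) \<and>
     (\<forall>s t. 0 \<le> s \<and> s \<le> t \<and> t \<le> T \<and> {s..t} \<inter> S = {} \<longrightarrow> u s = u t))"

definition proximal_normal :: "'a::real_inner set \<Rightarrow> 'a \<Rightarrow> 'a set" where
  "proximal_normal K x = {v. \<exists>\<sigma>\<ge>0. \<forall>y\<in>K. inner v (y - x) \<le> \<sigma> * (norm (y - x))\<^sup>2}"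

definition locally_closed :: "'a::metric_space set \<Rightarrow> bool" where
  "locally_closed K \<longleftrightarrow> (\<forall>x\<in>K. \<exists>e>0. closed (K \<inter> cball x e))"

definition locally_positive_reach :: "'a::real_inner set \<Rightarrow> bool" where
  "locally_positive_reach K \<longleftrightarrow> locally_closed K \<and>
     (\<exists>\<phi>. continuous_on K \<phi> \<and> (\<forall>x\<in>K. \<phi> x \<ge> (0::real)) \<and>
        (\<forall>x\<in>K. \<forall>y\<in>K. \<forall>v\<in>proximal_normal K x.
           inner v (y - x) \<le> \<phi> x * norm v * (norm (y - x))\<^sup>2))"

definition epigraph :: "('a \<Rightarrow> ereal) \<Rightarrow> ('a \<times> real) set" where
  "epigraph T = {(y, \<beta>). T y \<le> ereal \<beta>}"

end

(*
  (a) Follow a nearly optimal trajectory from x for a short time a. Its end point lies in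
  R_T(x) and has moved by O(a), so the proximal inequality bounds <zeta, y(a) - x> by O(a^2),
  whereas the dynamics force this quantity to be at least a h(x,zeta) - O(a^2). Letting a -> 0
  gives h(x,zeta) <= 0.

  (b) A point (y, beta) of epi(T) near (x, T(x)) is transported into R_T(x): if beta <= T(x), by
  flowing backwards from y for time T(x) - beta with a control realising h(x,zeta); if
  beta > T(x) and T(y) > T(x), by following a nearly optimal trajectory from y for a time of
  order beta - T(x). The proximal inequality at the transported point and a first order
  expansion of the flow give the proximal inequality for (zeta, h(x,zeta)) with a quadratic
  remainder. Far from (x, T(x)) the inequality follows from Cauchy-Schwarz.
*)
theory Submission
  imports Defs
begin

lemma inner_integral_le:
  fixes G :: "real \<Rightarrow> 'a::euclidean_space"
  assumes G: "G integrable_on {a..b}" and "a \<le> b" and bound: "\<And>r. r \<in> {a..b} \<Longrightarrow> \<zeta> \<bullet> G r \<le> c"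
  shows "\<zeta> \<bullet> integral {a..b} G \<le> (b - a) * c"
proof -
  have "\<zeta> \<bullet> integral {a..b} G = integral {a..b} (\<lambda>r. \<zeta> \<bullet> G r)"
    using integral_component_eq[OF G, of \<zeta>] by (simp add: inner_commute)
  also have "\<dots> \<le> integral {a..b} (\<lambda>r. c)"
    using integrable_component[OF G, of \<zeta>] bound by (intro integral_le) (auto simp: inner_commute)
  finally show ?thesis
    using \<open>a \<le> b\<close> by simp
qed

lemma inner_integral_ge:
  fixes G :: "real \<Rightarrow> 'a::euclidean_space"
  assumes "G integrable_on {a..b}" "a \<le> b" "\<And>r. r \<in> {a..b} \<Longrightarrow> c \<le> \<zeta> \<bullet> G r"
  shows "(b - a) * c \<le> \<zeta> \<bullet> integral {a..b} G"
  using inner_integral_le[of G a b "-\<zeta>" "-c"] assms by simp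

lemma norm_integral_le_length:
  fixes G :: "real \<Rightarrow> 'a::banach"
  assumes "G integrable_on {a..b}" "a \<le> b" "0 \<le> c" "\<And>r. r \<in> {a..b} \<Longrightarrow> norm (G r) \<le> c"
  shows "norm (integral {a..b} G) \<le> (b - a) * c"
  using has_integral_bound_real[of c "{}" G "integral {a..b} G" a b] assms
  by (simp add: integrable_integral mult.commute)

text \<open>Applied at a maximum point of \<open>g\<close>; for short times this replaces Gronwall's lemma.\<close>
lemma bound_of_affine_self_bound:
  fixes g :: "real \<Rightarrow> real"
  assumes "continuous_on {0..a} g" "0 \<le> a" "0 \<le> L" "a * L \<le> 1/2"
    and nonneg: "\<And>r. r \<in> {0..a} \<Longrightarrow> 0 \<le> g r"
    and self_bound: "\<And>M r. (\<And>\<rho>. \<rho> \<in> {0..a} \<Longrightarrow> g \<rho> \<le> M) \<Longrightarrow> r \<in> {0..a} \<Longrightarrow> g r \<le> a * (K + L * M)"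
    and r: "r \<in> {0..a}"
  shows "g r \<le> 2 * a * K"
proof -
  obtain r0 where r0: "r0 \<in> {0..a}" and max: "\<And>\<rho>. \<rho> \<in> {0..a} \<Longrightarrow> g \<rho> \<le> g r0"
    using continuous_attains_sup[of "{0..a}" g] assms(1,2) by auto
  have "g r0 \<le> a * (K + L * g r0)"
    using self_bound[OF max r0] .
  moreover have "a * L * g r0 \<le> g r0 / 2"
    using mult_right_mono[OF assms(4) nonneg[OF r0]] by simp
  ultimately have "g r0 \<le> 2 * a * K"
    by (simp add: algebra_simps)
  then show ?thesis
    using max[OF r] by simp
qed

lemma continuous_on_of_norm_lipschitz:
  assumes "\<And>v w. norm (F v - F w) \<le> L * norm (v - w)" "0 \<le> L"
  shows "continuous_on S F"
  by (rule lipschitz_on_continuous_on[of L]) (use assms in \<open>auto intro: lipschitz_onI simp: dist_norm\<close>)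

lemma lipschitz_backward_solution:
  fixes F :: "'a::banach \<Rightarrow> 'a"
  assumes lip: "\<And>v w. norm (F v - F w) \<le> L * norm (v - w)"
    and "0 \<le> L" "0 \<le> s" "s * L \<le> 1/2"
  obtains \<phi> where "continuous_on {0..s} \<phi>"
    and "\<And>r. r \<in> {0..s} \<Longrightarrow> \<phi> r = z - integral {r..s} (\<lambda>\<rho>. F (\<phi> \<rho>))"
proof -
  have F_cont: "continuous_on UNIV F"
    using continuous_on_of_norm_lipschitz[OF lip \<open>0 \<le> L\<close>] .
  \<comment> \<open>Picard operator on bounded continuous functions, clamped to \<open>[0, s]\<close>; by \<open>s L \<le> 1/2\<close>
    it is a contraction.\<close>
  define Q where "Q \<phi> r = z - integral {r..s} (\<lambda>\<rho>. F (apply_bcontfun \<phi> \<rho>))"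
    for \<phi> :: "real \<Rightarrow>\<^sub>C 'a" and r
  have int: "(\<lambda>\<rho>. F (apply_bcontfun \<phi> \<rho>)) integrable_on {a..b}" for \<phi> :: "real \<Rightarrow>\<^sub>C 'a" and a b
    by (intro integrable_continuous_real continuous_on_compose2[OF F_cont] continuous_on_apply_bcontfun)
      auto
  have "\<forall>\<phi>. \<exists>\<psi>::real \<Rightarrow>\<^sub>C 'a. \<forall>r. \<psi> r = Q \<phi> (clamp 0 s r)"
  proof
    fix \<phi>
    have "continuous_on {0..s} (Q \<phi>)"
      unfolding Q_def by (intro continuous_intros indefinite_integral_continuous_1' int)
    then obtain \<psi> :: "real \<Rightarrow>\<^sub>C 'a" where "\<And>r. \<psi> r = Q \<phi> (clamp 0 s r)"
      using continuous_on_cbox_bcontfunE[of 0 s "Q \<phi>"] by (auto simp: cbox_interval)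
    then show "\<exists>\<psi>::real \<Rightarrow>\<^sub>C 'a. \<forall>r. \<psi> r = Q \<phi> (clamp 0 s r)" by blast
  qed
  from choice[OF this] obtain P :: "(real \<Rightarrow>\<^sub>C 'a) \<Rightarrow> (real \<Rightarrow>\<^sub>C 'a)"
    where P: "\<And>\<phi> r. P \<phi> r = Q \<phi> (clamp 0 s r)"
    by blast
  have clamp: "clamp 0 s r \<in> {0..s}" for r
    using clamp_in_interval[of 0 s r] \<open>0 \<le> s\<close> by (simp add: cbox_interval)
  have "dist (P \<phi>1 r) (P \<phi>2 r) \<le> (1/2) * dist \<phi>1 \<phi>2" for \<phi>1 \<phi>2 r
  proof -
    have "dist (P \<phi>1 r) (P \<phi>2 r)
        = norm (integral {clamp 0 s r..s} (\<lambda>\<rho>. F (\<phi>2 \<rho>) - F (\<phi>1 \<rho>)))"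
      unfolding P Q_def dist_norm by (subst integral_diff) (auto intro: int simp: algebra_simps)
    also have "\<dots> \<le> (s - clamp 0 s r) * (L * dist \<phi>1 \<phi>2)"
    proof (rule norm_integral_le_length)
      fix \<rho>
      have "norm (F (\<phi>2 \<rho>) - F (\<phi>1 \<rho>)) \<le> L * norm (\<phi>2 \<rho> - \<phi>1 \<rho>)"
        by (rule lip)
      also have "\<dots> \<le> L * dist \<phi>1 \<phi>2"
        using dist_bounded[of \<phi>2 \<rho> \<phi>1] \<open>0 \<le> L\<close>
        by (auto intro!: mult_left_mono simp: dist_norm norm_minus_commute)
      finally show "norm (F (\<phi>2 \<rho>) - F (\<phi>1 \<rho>)) \<le> L * dist \<phi>1 \<phi>2" .
    qed (use clamp[of r] \<open>0 \<le> L\<close> in \<open>auto intro: integrable_diff int\<close>)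
    also have "\<dots> \<le> s * (L * dist \<phi>1 \<phi>2)"
      using clamp[of r] \<open>0 \<le> L\<close> by (intro mult_right_mono) auto
    also have "\<dots> \<le> (1/2) * dist \<phi>1 \<phi>2"
      using mult_right_mono[OF \<open>s * L \<le> 1/2\<close>, of "dist \<phi>1 \<phi>2"] by (simp add: algebra_simps)
    finally show ?thesis .
  qed
  then have "dist (P \<phi>1) (P \<phi>2) \<le> (1/2) * dist \<phi>1 \<phi>2" for \<phi>1 \<phi>2
    by (intro dist_bound)
  then obtain \<phi> where "P \<phi> = \<phi>"
    using banach_fix_type[of "1/2" P] by auto
  then have "\<phi> r = z - integral {r..s} (\<lambda>\<rho>. F (\<phi> \<rho>))" if "r \<in> {0..s}" for r
    using P[of \<phi> r] clamp_cancel_cbox[of r 0 s] that by (simp add: Q_def cbox_interval)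
  then show ?thesis
    using that continuous_on_apply_bcontfun by blast
qed

lemma backward_solution_bound:
  fixes F :: "'a::banach \<Rightarrow> 'a"
  assumes lip: "\<And>v w. norm (F v - F w) \<le> L * norm (v - w)"
    and "0 \<le> L" "0 \<le> s" "s * L \<le> 1/2"
    and \<phi>_cont: "continuous_on {0..s} \<phi>"
    and \<phi>: "\<And>r. r \<in> {0..s} \<Longrightarrow> \<phi> r = z - integral {r..s} (\<lambda>\<rho>. F (\<phi> \<rho>))"
    and r: "r \<in> {0..s}"
  shows "norm (\<phi> r - z) \<le> 2 * s * norm (F z)"
proof (rule bound_of_affine_self_bound[where g="\<lambda>r. norm (\<phi> r - z)", OF _ assms(3,2,4) _ _ r])
  show "continuous_on {0..s} (\<lambda>r. norm (\<phi> r - z))"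
    by (intro continuous_intros \<phi>_cont)
next
  fix M r assume M: "\<And>\<rho>. \<rho> \<in> {0..s} \<Longrightarrow> norm (\<phi> \<rho> - z) \<le> M" and r: "r \<in> {0..s}"
  have F_bound: "norm (F (\<phi> \<rho>)) \<le> norm (F z) + L * M" if "\<rho> \<in> {r..s}" for \<rho>
  proof -
    have "norm (F (\<phi> \<rho>)) \<le> norm (F z) + norm (F (\<phi> \<rho>) - F z)"
      by (rule norm_triangle_sub)
    also have "norm (F (\<phi> \<rho>) - F z) \<le> L * M"
      using lip[of "\<phi> \<rho>" z] mult_left_mono[OF M \<open>0 \<le> L\<close>, of \<rho>] that r by auto
    finally show ?thesis by simp
  qed
  have "norm (\<phi> r - z) = norm (integral {r..s} (\<lambda>\<rho>. F (\<phi> \<rho>)))"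
    using \<phi>[OF r] by simp
  also have "\<dots> \<le> (s - r) * (norm (F z) + L * M)"
  proof (rule norm_integral_le_length[OF _ _ _ F_bound])
    have "continuous_on {0..s} (\<lambda>\<rho>. F (\<phi> \<rho>))"
      by (rule continuous_on_compose2[OF continuous_on_of_norm_lipschitz[OF lip \<open>0 \<le> L\<close>] \<phi>_cont])
        auto
    then show "(\<lambda>\<rho>. F (\<phi> \<rho>)) integrable_on {r..s}"
      using r by (intro integrable_continuous_real) (auto elim: continuous_on_subset)
    show "0 \<le> norm (F z) + L * M"
      using F_bound[of s] r by (metis atLeastAtMost_iff norm_ge_zero order.trans order_refl)
  qed (use r in auto)
  also have "\<dots> \<le> s * (norm (F z) + L * M)"
    using r F_bound[of s] by (intro mult_right_mono) (auto intro: order_trans[OF norm_ge_zero])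
  finally show "norm (\<phi> r - z) \<le> s * (norm (F z) + L * M)" .
qed simp

lemma proximal_normalI_local:
  fixes v x :: "'a::real_inner"
  assumes "0 < \<delta>" "0 \<le> \<sigma>"
    and near: "\<And>y. y \<in> K \<Longrightarrow> norm (y - x) \<le> \<delta> \<Longrightarrow> v \<bullet> (y - x) \<le> \<sigma> * (norm (y - x))\<^sup>2"
  shows "v \<in> proximal_normal K x"
proof -
  have "v \<bullet> (y - x) \<le> (\<sigma> + norm v / \<delta>) * (norm (y - x))\<^sup>2" if "y \<in> K" for y
  proof (cases "norm (y - x) \<le> \<delta>")
    case True
    have "0 \<le> norm v / \<delta> * (norm (y - x))\<^sup>2"
      using \<open>0 < \<delta>\<close> by simp
    then show ?thesis
      using near[OF that True] by (simp add: distrib_right)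
  next
    case False
    have "v \<bullet> (y - x) \<le> norm v * norm (y - x)"
      by (rule norm_cauchy_schwarz)
    also have "\<dots> \<le> norm v / \<delta> * (norm (y - x))\<^sup>2"
      using False \<open>0 < \<delta>\<close> mult_left_mono[of \<delta> "norm (y - x)" "norm v * norm (y - x)"]
      by (simp add: field_simps power2_eq_square)
    also have "\<dots> \<le> (\<sigma> + norm v / \<delta>) * (norm (y - x))\<^sup>2"
      using \<open>0 \<le> \<sigma>\<close> by (simp add: distrib_right)
    finally show ?thesis .
  qed
  moreover have "0 \<le> \<sigma> + norm v / \<delta>"
    using assms(1,2) by simp
  ultimately show ?thesis
    unfolding proximal_normal_def by blast
qed

lemma quadratic_remainder_bound:
  fixes \<sigma> c k e s W :: real
  assumes "0 \<le> \<sigma>" "0 \<le> c" "0 \<le> k" "0 \<le> e" "0 \<le> s" "0 \<le> W" "W \<le> e + k * s"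
  shows "\<sigma> * W\<^sup>2 + s * (c * (e + k * s)) \<le> (2 * \<sigma> + 2 * \<sigma> * k\<^sup>2 + c * (1 + k)) * (e\<^sup>2 + s\<^sup>2)"
proof -
  have "W\<^sup>2 \<le> (e + k * s)\<^sup>2"
    using assms by (intro power_mono) auto
  also have "\<dots> \<le> 2 * e\<^sup>2 + 2 * (k\<^sup>2 * s\<^sup>2)"
    using zero_le_power2[of "e - k * s"] by (simp add: power2_eq_square algebra_simps)
  finally have W: "\<sigma> * W\<^sup>2 \<le> 2 * (\<sigma> * e\<^sup>2) + 2 * (\<sigma> * k\<^sup>2 * s\<^sup>2)"
    using mult_left_mono[OF _ assms(1)] by (fastforce simp: algebra_simps)
  have "s * e \<le> e\<^sup>2 + s\<^sup>2"
    using zero_le_power2[of "e - s"] mult_nonneg_nonneg[OF assms(5,4)]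
    by (simp add: power2_eq_square algebra_simps)
  then have se: "c * (s * e) \<le> c * (e\<^sup>2 + s\<^sup>2)"
    using assms(2) by (rule mult_left_mono)
  have e2: "\<sigma> * e\<^sup>2 \<le> \<sigma> * (e\<^sup>2 + s\<^sup>2)"
    using assms(1) by (intro mult_left_mono) auto
  have s2: "\<sigma> * k\<^sup>2 * s\<^sup>2 \<le> \<sigma> * k\<^sup>2 * (e\<^sup>2 + s\<^sup>2)" "c * k * s\<^sup>2 \<le> c * k * (e\<^sup>2 + s\<^sup>2)"
    using assms(1-3) by (intro mult_left_mono; simp)+
  have "\<sigma> * W\<^sup>2 + s * (c * (e + k * s)) = \<sigma> * W\<^sup>2 + c * (s * e) + c * k * s\<^sup>2"
    by (simp add: power2_eq_square algebra_simps)
  moreover have "(2 * \<sigma> + 2 * \<sigma> * k\<^sup>2 + c * (1 + k)) * (e\<^sup>2 + s\<^sup>2)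
      = 2 * (\<sigma> * (e\<^sup>2 + s\<^sup>2)) + 2 * (\<sigma> * k\<^sup>2 * (e\<^sup>2 + s\<^sup>2)) + c * (e\<^sup>2 + s\<^sup>2) + c * k * (e\<^sup>2 + s\<^sup>2)"
    by (simp add: algebra_simps)
  ultimately show ?thesis
    using W se e2 s2 by linarith
qed

lemma min_time_le:
  assumes "admissible_control U u" "is_trajectory f x u y" "0 \<le> \<theta>" "y \<theta> = 0"
  shows "min_time f U x \<le> ereal \<theta>"
  unfolding min_time_def using assms by (intro Inf_lower) blast

lemma min_time_nonneg: "0 \<le> min_time f U x"
  unfolding min_time_def by (intro Inf_greatest) auto

lemma min_time_lessE:
  assumes "min_time f U x < ereal c"
  obtains \<theta> u y where "0 \<le> \<theta>" "\<theta> < c" "admissible_control U u" "is_trajectory f x u y" "y \<theta> = 0"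
  using assms unfolding min_time_def by (auto simp: Inf_less_iff)

lemma admissible_control_in: "admissible_control U u \<Longrightarrow> 0 \<le> t \<Longrightarrow> u t \<in> U"
  unfolding admissible_control_def by blast

lemma admissible_control_iff_preimage:
  "admissible_control U u \<longleftrightarrow>
     (\<forall>T\<in>sets borel. {t \<in> {0..}. u t \<in> T} \<in> sets lebesgue) \<and> (\<forall>t\<ge>0. u t \<in> U)"
  unfolding admissible_control_def
  by (subst borel_measurable_lebesgue_on_preimage_borel) auto

lemma is_trajectory_integrable:
  "is_trajectory f x u y \<Longrightarrow> 0 \<le> t \<Longrightarrow> (\<lambda>s. f (y s) (u s)) integrable_on {0..t}"
  unfolding is_trajectory_def by blast

lemma is_trajectory_eq:
  "is_trajectory f x u y \<Longrightarrow> 0 \<le> t \<Longrightarrow> y t = x + integral {0..t} (\<lambda>s. f (y s) (u s))"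
  unfolding is_trajectory_def by blast

lemma is_trajectory_start: "is_trajectory f x u y \<Longrightarrow> y 0 = x"
  using is_trajectory_eq[of f x u y 0] by simp

lemma is_trajectory_continuous_on:
  assumes "is_trajectory f x u y" "0 \<le> a"
  shows "continuous_on {0..a} y"
proof -
  have "continuous_on {0..a} (\<lambda>t. x + integral {0..t} (\<lambda>s. f (y s) (u s)))"
    by (intro continuous_intros indefinite_integral_continuous_1 is_trajectory_integrable[OF assms])
  then show ?thesis
    by (rule continuous_on_eq) (use is_trajectory_eq[OF assms(1)] in auto)
qed

lemma admissible_control_shift:
  assumes "admissible_control U u" "0 \<le> a"
  shows "admissible_control U (\<lambda>t. u (t + a))"
proof -
  have "{t \<in> {0..}. u (t + a) \<in> T} \<in> sets lebesgue" if "T \<in> sets borel" for T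
  proof -
    have "{t \<in> {0..}. u (t + a) \<in> T} = (+) (-a) ` ({t \<in> {0..}. u t \<in> T} \<inter> {a..})"
      using assms(2) by (auto simp: image_iff intro!: bexI[where x="_ + a"])
    also have "\<dots> \<in> sets lebesgue"
      using assms(1) that
      by (intro lebesgue_sets_translation sets.Int) (auto simp: admissible_control_iff_preimage)
    finally show ?thesis .
  qed
  then show ?thesis
    using assms by (auto simp: admissible_control_iff_preimage)
qed

lemma is_trajectory_shift:
  assumes "is_trajectory f x u y" "0 \<le> a"
  shows "is_trajectory f (y a) (\<lambda>t. u (t + a)) (\<lambda>t. y (t + a))"
  unfolding is_trajectory_def
proof (intro allI impI conjI)
  fix t :: real assume t: "0 \<le> t"
  let ?g = "\<lambda>s. f (y s) (u s)"
  have i: "?g integrable_on {0..t+a}" using is_trajectory_integrable[OF assms(1)] t assms(2) by auto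
  have "?g integrable_on {a..t+a}" by (rule integrable_subinterval_real[OF i]) (use assms(2) in auto)
  from integrable_shift_real_ivl[OF this, where c=a]
  show "(\<lambda>s. f (y (s + a)) (u (s + a))) integrable_on {0..t}" by simp
  have "integral {0..t} (\<lambda>s. f (y (s + a)) (u (s + a))) = integral {a..t+a} ?g"
    using integral_shift_real_ivl[where f="?g" and a=a and c=a and b="t+a"] by simp
  moreover have "integral {0..a} ?g + integral {a..t+a} ?g = integral {0..t+a} ?g"
    by (rule Henstock_Kurzweil_Integration.integral_combine[OF _ _ i]) (use assms(2) t in auto)
  ultimately show "y (t + a) = y a + integral {0..t} (\<lambda>s. f (y (s + a)) (u (s + a)))"
    using is_trajectory_eq[OF assms(1)] assms(2) t by (simp add: algebra_simps)
qed

lemma min_time_along_trajectory: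
  assumes "admissible_control U u" "is_trajectory f x u y" "y \<theta> = 0" "0 \<le> a" "a \<le> \<theta>"
  shows "min_time f U (y a) \<le> ereal (\<theta> - a)"
  using min_time_le[OF admissible_control_shift[OF assms(1,4)] is_trajectory_shift[OF assms(2,4)]]
    assms by simp

lemma admissible_control_prepend:
  assumes "u0 \<in> U" "0 \<le> s" "admissible_control U u"
  shows "admissible_control U (\<lambda>t. if t < s then u0 else u (t - s))"
proof -
  have meas_u: "\<forall>T\<in>sets borel. {t \<in> {0..}. u t \<in> T} \<in> sets lebesgue"
    using assms(3) by (simp add: admissible_control_iff_preimage)
  have "{t \<in> {0..}. (if t < s then u0 else u (t - s)) \<in> T} \<in> sets lebesgue"
    if "T \<in> sets borel" for T
  proof -
    have "{t \<in> {0..}. (if t < s then u0 else u (t - s)) \<in> T}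
        = (if u0 \<in> T then {0..<s} else {}) \<union> (+) s ` {t \<in> {0..}. u t \<in> T}"
      (is "?A = ?B")
    proof (intro set_eqI iffI)
      fix t assume "t \<in> ?A"
      then show "t \<in> ?B"
        by (cases "t < s") (auto intro!: image_eqI[where x="t - s"])
    next
      fix t assume "t \<in> ?B"
      then show "t \<in> ?A"
        using assms(2) by (cases "u0 \<in> T") auto
    qed
    also have "\<dots> \<in> sets lebesgue"
      using meas_u that by (intro sets.Un lebesgue_sets_translation) auto
    finally show ?thesis .
  qed
  moreover have "\<forall>t\<ge>0. (if t < s then u0 else u (t - s)) \<in> U"
    using assms(1) admissible_control_in[OF assms(3)] by simp
  ultimately show ?thesis
    unfolding admissible_control_iff_preimage by blast
qed

lemma is_trajectory_prepend:
  assumes s: "0 \<le> s"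
    and \<phi>: "\<forall>r\<in>{0..s}. \<phi> r = w + integral {0..r} (\<lambda>\<rho>. f (\<phi> \<rho>) u0)"
    and \<phi>_int: "(\<lambda>\<rho>. f (\<phi> \<rho>) u0) integrable_on {0..s}"
    and tr: "is_trajectory f (\<phi> s) u y"
  shows "is_trajectory f w (\<lambda>t. if t < s then u0 else u (t - s)) (\<lambda>t. if t \<le> s then \<phi> t else y (t - s))"
  unfolding is_trajectory_def
proof (intro allI impI)
  fix t :: real assume t: "0 \<le> t"
  let ?G = "\<lambda>r. f (if r \<le> s then \<phi> r else y (r - s)) (if r < s then u0 else u (r - s))"
  let ?F = "\<lambda>\<rho>. f (\<phi> \<rho>) u0"
  let ?g = "\<lambda>r. f (y (r - s)) (u (r - s))"
  have G_F: "?G r = ?F r" if "r \<in> {0..s} - {s}" for r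
    using that by auto
  have G_g: "?G r = ?g r" if "r \<in> {s..t} - {s}" for r
    using that by auto
  have iG1: "?G integrable_on {0..s}"
    by (rule integrable_spike_finite[of "{s}" _ _ ?F]) (use G_F \<phi>_int in auto)
  have I1: "integral {0..s} ?G = integral {0..s} ?F"
    by (rule integral_spike[of "{s}"]) (use G_F in auto)
  show "?G integrable_on {0..t} \<and>
        (if t \<le> s then \<phi> t else y (t - s)) = w + integral {0..t} ?G"
  proof (cases "t \<le> s")
    case True
    have F_int: "?F integrable_on {0..t}"
      by (rule integrable_subinterval_real[OF \<phi>_int]) (use True in simp)
    have G_F': "?G r = ?F r" if "r \<in> {0..t} - {s}" for r
      using that True by simp
    have "?G integrable_on {0..t}"
      by (rule integrable_spike_finite[of "{s}" _ _ ?F]) (use G_F' F_int in auto)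
    moreover have "integral {0..t} ?G = integral {0..t} ?F"
      by (rule integral_spike[of "{s}"]) (use G_F' in auto)
    moreover have "\<phi> t = w + integral {0..t} ?F"
      using \<phi> True t by simp
    ultimately show ?thesis
      using True by simp
  next
    case False
    have "(\<lambda>r. f (y r) (u r)) integrable_on {0..t-s}"
      using is_trajectory_integrable[OF tr] False by auto
    from integrable_shift_real_ivl[OF this, where c="-s"]
    have ig: "?g integrable_on {s..t}" by simp
    have iG2: "?G integrable_on {s..t}"
      by (rule integrable_spike_finite[of "{s}" _ _ ?g]) (use G_g ig in auto)
    have I2: "integral {s..t} ?G = integral {s..t} ?g"
      by (rule integral_spike[of "{s}"]) (use G_g in auto)
    have I3: "integral {s..t} ?g = integral {0..t-s} (\<lambda>r. f (y r) (u r))"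
      using integral_shift_real_ivl[where f="\<lambda>r. f (y r) (u r)" and a=0 and c="-s" and b="t-s"]
      by simp
    have iG: "?G integrable_on {0..t}"
      by (rule Henstock_Kurzweil_Integration.integrable_combine[OF _ _ iG1 iG2]) (use s False in auto)
    have comb: "integral {0..s} ?G + integral {s..t} ?G = integral {0..t} ?G"
      by (rule Henstock_Kurzweil_Integration.integral_combine[OF _ _ iG]) (use s False in auto)
    have "y (t - s) = \<phi> s + integral {0..t-s} (\<lambda>r. f (y r) (u r))"
      using is_trajectory_eq[OF tr] False by auto
    also have "\<dots> = w + integral {0..t} ?G"
      using \<phi> s by (simp add: I1 I2 I3 comb[symmetric] add.assoc)
    finally show ?thesis
      using iG False by simp
  qed
qed

lemma min_time_le_prepend:
  assumes "u0 \<in> U" "0 \<le> s"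
    and "\<forall>r\<in>{0..s}. \<phi> r = w + integral {0..r} (\<lambda>\<rho>. f (\<phi> \<rho>) u0)"
    and "(\<lambda>\<rho>. f (\<phi> \<rho>) u0) integrable_on {0..s}"
    and "admissible_control U u" "is_trajectory f (\<phi> s) u y" "0 \<le> \<theta>" "y \<theta> = 0"
  shows "min_time f U w \<le> ereal (s + \<theta>)"
proof -
  have "(if s + \<theta> \<le> s then \<phi> (s + \<theta>) else y (s + \<theta> - s)) = 0"
    using assms(7,8) is_trajectory_start[OF assms(6)] by auto
  then show ?thesis
    using min_time_le[OF admissible_control_prepend[OF assms(1,2,5)]
        is_trajectory_prepend[OF assms(2,3,4,6)]] assms(2,7)
    by simp
qed

locale control_system =
  fixes f :: "real ^ 'n \<Rightarrow> real ^ 'm \<Rightarrow> real ^ 'n" and U :: "(real ^ 'm) set" and L :: real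
  assumes U_compact: "compact U" and U_nonempty: "U \<noteq> {}"
    and f_continuous: "continuous_on (UNIV \<times> U) (\<lambda>(z, u). f z u)"
    and L_nonneg: "0 \<le> L"
    and f_lipschitz: "\<And>z w u. u \<in> U \<Longrightarrow> norm (f z u - f w u) \<le> L * norm (z - w)"
begin

lemma continuous_on_control: "continuous_on U (f z)"
proof -
  have "continuous_on U (\<lambda>u. (\<lambda>(z, u). f z u) (z, u))"
    by (rule continuous_on_compose2[OF f_continuous]) (auto intro: continuous_intros)
  then show ?thesis
    by simp
qed

lemma continuous_on_state: "u \<in> U \<Longrightarrow> continuous_on S (\<lambda>z. f z u)"
  using continuous_on_of_norm_lipschitz[OF f_lipschitz L_nonneg] .

lemma velocity_bound:
  obtains K where "0 \<le> K" "\<And>z u. norm (z - x) \<le> 1 \<Longrightarrow> u \<in> U \<Longrightarrow> norm (f z u) \<le> K"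
proof -
  have "bounded (f x ` U)"
    by (intro compact_imp_bounded compact_continuous_image continuous_on_control U_compact)
  then obtain C where C: "\<And>u. u \<in> U \<Longrightarrow> norm (f x u) \<le> C"
    unfolding bounded_iff by blast
  show ?thesis
  proof
    show "0 \<le> C + L"
      using C U_nonempty L_nonneg by (meson ex_in_conv norm_ge_zero order_trans add_nonneg_nonneg)
    fix z u assume "norm (z - x) \<le> 1" "u \<in> U"
    then have "norm (f z u - f x u) \<le> L"
      using f_lipschitz[of u z x] mult_left_mono[of "norm (z - x)" 1 L] L_nonneg by simp
    then show "norm (f z u) \<le> C + L"
      using C[OF \<open>u \<in> U\<close>] norm_triangle_sub[of "f z u" "f x u"] by simp
  qed
qed

lemma inner_velocity_lipschitz:
  "u \<in> U \<Longrightarrow> \<bar>\<zeta> \<bullet> f a u - \<zeta> \<bullet> f b u\<bar> \<le> norm \<zeta> * L * norm (a - b)"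
  using Cauchy_Schwarz_ineq2[of \<zeta> "f a u - f b u"] f_lipschitz[of u a b]
    mult_left_mono[of _ _ "norm \<zeta>"]
  by (fastforce simp: inner_diff_right mult.assoc)

lemma min_hamiltonian_le: "u \<in> U \<Longrightarrow> min_hamiltonian f U x \<zeta> \<le> \<zeta> \<bullet> f x u"
  unfolding min_hamiltonian_def
  by (intro cInf_lower imageI bounded_imp_bdd_below compact_imp_bounded compact_continuous_image
      U_compact continuous_intros continuous_on_control)

lemma min_hamiltonian_attained:
  obtains u where "u \<in> U" "min_hamiltonian f U x \<zeta> = \<zeta> \<bullet> f x u"
proof -
  have "continuous_on U (\<lambda>u. \<zeta> \<bullet> f x u)"
    by (intro continuous_intros continuous_on_control)
  then obtain u where "u \<in> U" "\<And>v. v \<in> U \<Longrightarrow> \<zeta> \<bullet> f x u \<le> \<zeta> \<bullet> f x v"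
    using continuous_attains_inf[OF U_compact U_nonempty] by blast
  then have "min_hamiltonian f U x \<zeta> = \<zeta> \<bullet> f x u"
    unfolding min_hamiltonian_def by (intro cInf_eq_minimum) auto
  with \<open>u \<in> U\<close> show ?thesis
    using that by blast
qed

lemma trajectory_bound:
  assumes "admissible_control U u" and tr: "is_trajectory f y u Y"
    and K: "\<And>u. u \<in> U \<Longrightarrow> norm (f y u) \<le> K"
    and "0 \<le> a" "a * L \<le> 1/2" "r \<in> {0..a}"
  shows "norm (Y r - y) \<le> 2 * a * K"
proof (rule bound_of_affine_self_bound[where g="\<lambda>r. norm (Y r - y)", OF _ \<open>0 \<le> a\<close> L_nonneg])
  show "continuous_on {0..a} (\<lambda>r. norm (Y r - y))"
    by (intro continuous_intros is_trajectory_continuous_on[OF tr \<open>0 \<le> a\<close>])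
next
  fix M r assume M: "\<And>\<rho>. \<rho> \<in> {0..a} \<Longrightarrow> norm (Y \<rho> - y) \<le> M" and r: "r \<in> {0..a}"
  have bound: "norm (f (Y \<rho>) (u \<rho>)) \<le> K + L * M" if "\<rho> \<in> {0..r}" for \<rho>
  proof -
    have u: "u \<rho> \<in> U"
      using admissible_control_in[OF assms(1)] that by auto
    have "norm (f (Y \<rho>) (u \<rho>) - f y (u \<rho>)) \<le> L * M"
      using f_lipschitz[OF u, of "Y \<rho>" y] mult_left_mono[OF M L_nonneg, of \<rho>] that r by auto
    then show ?thesis
      using K[OF u] norm_triangle_sub[of "f (Y \<rho>) (u \<rho>)" "f y (u \<rho>)"] by simp
  qed
  then have "norm (integral {0..r} (\<lambda>\<rho>. f (Y \<rho>) (u \<rho>))) \<le> (r - 0) * (K + L * M)"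
    using r is_trajectory_integrable[OF tr, of r]
    by (intro norm_integral_le_length) (auto intro: order_trans[OF norm_ge_zero])
  also have "\<dots> \<le> a * (K + L * M)"
    using r bound[of 0] by (intro mult_right_mono) (auto intro: order_trans[OF norm_ge_zero])
  finally show "norm (Y r - y) \<le> a * (K + L * M)"
    using is_trajectory_eq[OF tr, of r] r by simp
qed (use assms in auto)

lemma min_time_backward_step:
  assumes u0: "u0 \<in> U" and s: "0 \<le> s" "s * L \<le> 1/2" and Tz: "min_time f U z \<le> ereal \<beta>"
  obtains \<phi> where "\<And>r. r \<in> {0..s} \<Longrightarrow> norm (\<phi> r - z) \<le> 2 * s * norm (f z u0)"
    and "(\<lambda>\<rho>. f (\<phi> \<rho>) u0) integrable_on {0..s}"
    and "z = \<phi> 0 + integral {0..s} (\<lambda>\<rho>. f (\<phi> \<rho>) u0)"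
    and "min_time f U (\<phi> 0) \<le> ereal (s + \<beta>)"
proof -
  note lip = f_lipschitz[OF u0]
  obtain \<phi> where \<phi>_cont: "continuous_on {0..s} \<phi>"
    and \<phi>: "\<And>r. r \<in> {0..s} \<Longrightarrow> \<phi> r = z - integral {r..s} (\<lambda>\<rho>. f (\<phi> \<rho>) u0)"
    using lipschitz_backward_solution[OF lip L_nonneg s] by blast
  have int: "(\<lambda>\<rho>. f (\<phi> \<rho>) u0) integrable_on {0..s}"
    by (intro integrable_continuous_real continuous_on_compose2[OF continuous_on_state[OF u0] \<phi>_cont])
      auto
  have forward: "\<phi> r = \<phi> 0 + integral {0..r} (\<lambda>\<rho>. f (\<phi> \<rho>) u0)" if "r \<in> {0..s}" for r
  proof -
    have "\<phi> r = z - integral {r..s} (\<lambda>\<rho>. f (\<phi> \<rho>) u0)"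
      by (rule \<phi>[OF that])
    also have "z = \<phi> 0 + integral {0..s} (\<lambda>\<rho>. f (\<phi> \<rho>) u0)"
      using \<phi>[of 0] s by simp
    also have "integral {0..s} (\<lambda>\<rho>. f (\<phi> \<rho>) u0)
        = integral {0..r} (\<lambda>\<rho>. f (\<phi> \<rho>) u0) + integral {r..s} (\<lambda>\<rho>. f (\<phi> \<rho>) u0)"
      using that by (intro Henstock_Kurzweil_Integration.integral_combine[symmetric] int) auto
    finally show ?thesis
      by (simp add: algebra_simps)
  qed
  have \<phi>_end: "\<phi> s = z"
    using \<phi>[of s] s by simp
  have "min_time f U (\<phi> 0) \<le> ereal (s + \<beta>)"
  proof (rule ereal_le_epsilon2)
    fix \<epsilon> :: real assume "0 < \<epsilon>"
    have "min_time f U z < ereal (\<beta> + \<epsilon>)"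
      by (rule order_le_less_trans[OF Tz]) (use \<open>0 < \<epsilon>\<close> in simp)
    then obtain \<theta> u Y where \<theta>: "0 \<le> \<theta>" "\<theta> < \<beta> + \<epsilon>" and adm: "admissible_control U u"
      and tr: "is_trajectory f (\<phi> s) u Y" and Y: "Y \<theta> = 0"
      unfolding \<phi>_end by (rule min_time_lessE)
    have "\<forall>r\<in>{0..s}. \<phi> r = \<phi> 0 + integral {0..r} (\<lambda>\<rho>. f (\<phi> \<rho>) u0)"
      using forward by blast
    then have "min_time f U (\<phi> 0) \<le> ereal (s + \<theta>)"
      using min_time_le_prepend[OF u0 s(1) _ int adm tr \<theta>(1) Y] by blast
    also have "\<dots> \<le> ereal (s + \<beta>) + ereal \<epsilon>"
      using \<theta> by simp
    finally show "min_time f U (\<phi> 0) \<le> ereal (s + \<beta>) + ereal \<epsilon>" .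
  qed
  moreover have "z = \<phi> 0 + integral {0..s} (\<lambda>\<rho>. f (\<phi> \<rho>) u0)"
    using forward[of s] s unfolding \<phi>_end by simp
  ultimately show ?thesis
    using that backward_solution_bound[OF lip L_nonneg s \<phi>_cont \<phi>] int by blast
qed

end

locale normal_to_reach_set = control_system f U L for f U L +
  fixes x \<zeta> :: "real ^ 'n" and \<tau> \<sigma> K :: real
  assumes x_nonzero: "x \<noteq> 0"
    and min_time_x: "min_time f U x = ereal \<tau>"
    and \<sigma>_nonneg: "0 \<le> \<sigma>"
    and proximal: "\<And>y. min_time f U y \<le> ereal \<tau> \<Longrightarrow> \<zeta> \<bullet> (y - x) \<le> \<sigma> * (norm (y - x))\<^sup>2"
    and K_nonneg: "0 \<le> K"
    and K_bound: "\<And>z u. norm (z - x) \<le> 1 \<Longrightarrow> u \<in> U \<Longrightarrow> norm (f z u) \<le> K"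
begin

abbreviation h where "h \<equiv> min_hamiltonian f U x \<zeta>"

lemma \<tau>_nonneg: "0 \<le> \<tau>"
  using min_time_nonneg[of f U x] min_time_x by simp

lemma trajectory_near:
  assumes "admissible_control U u" "is_trajectory f y u Y" "norm (y - x) \<le> 1"
    and "0 \<le> a" "a * L \<le> 1/2" "r \<in> {0..a}"
  shows "norm (Y r - x) \<le> norm (y - x) + 2 * a * K"
  using trajectory_bound[OF assms(1,2) K_bound[OF assms(3)] assms(4-6)]
    norm_triangle_ineq[of "Y r - y" "y - x"]
  by simp

lemma inner_trajectory_increment_ge:
  assumes adm: "admissible_control U u" and tr: "is_trajectory f y u Y" and y: "norm (y - x) \<le> 1"
    and a: "0 \<le> a" "a * L \<le> 1/2"
  shows "a * (h - norm \<zeta> * L * (norm (y - x) + 2 * a * K)) \<le> \<zeta> \<bullet> (Y a - y)"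
proof -
  have "(a - 0) * (h - norm \<zeta> * L * (norm (y - x) + 2 * a * K))
      \<le> \<zeta> \<bullet> integral {0..a} (\<lambda>r. f (Y r) (u r))"
  proof (rule inner_integral_ge)
    show "(\<lambda>r. f (Y r) (u r)) integrable_on {0..a}"
      by (rule is_trajectory_integrable[OF tr a(1)])
    fix r assume r: "r \<in> {0..a}"
    have u: "u r \<in> U"
      using admissible_control_in[OF adm] r by simp
    have "norm \<zeta> * L * norm (Y r - x) \<le> norm \<zeta> * L * (norm (y - x) + 2 * a * K)"
      using trajectory_near[OF adm tr y a r] L_nonneg by (intro mult_left_mono) auto
    then show "h - norm \<zeta> * L * (norm (y - x) + 2 * a * K) \<le> \<zeta> \<bullet> f (Y r) (u r)"
      using min_hamiltonian_le[OF u, of x \<zeta>] inner_velocity_lipschitz[OF u, of \<zeta> "Y r" x] by linarith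
  qed (use a in auto)
  then show ?thesis
    using is_trajectory_eq[OF tr a(1)] by simp
qed

lemma min_hamiltonian_le_short_time:
  assumes s: "0 < s" "s * L \<le> 1/2"
  shows "h \<le> s * (4 * \<sigma> * K\<^sup>2 + 2 * norm \<zeta> * L * K)"
proof -
  have "min_time f U x < ereal (\<tau> + s)"
    using min_time_x s(1) by simp
  then obtain \<theta> u Y where \<theta>: "0 \<le> \<theta>" "\<theta> < \<tau> + s" and adm: "admissible_control U u"
    and tr: "is_trajectory f x u Y" and Y: "Y \<theta> = 0"
    by (rule min_time_lessE)
  have "\<theta> \<noteq> 0"
    using is_trajectory_start[OF tr] Y x_nonzero by auto
  define a where "a = min s \<theta>"
  have a: "0 < a" "a \<le> s" "a \<le> \<theta>" "\<theta> - a \<le> \<tau>"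
    unfolding a_def using s \<theta> \<open>\<theta> \<noteq> 0\<close> \<tau>_nonneg by auto
  have aL: "a * L \<le> 1/2"
    using mult_right_mono[OF a(2) L_nonneg] s(2) by simp
  have near: "norm (Y a - x) \<le> 2 * a * K"
    using trajectory_near[OF adm tr _ _ aL, of a] a(1) by simp
  have "min_time f U (Y a) \<le> ereal (\<theta> - a)"
    using min_time_along_trajectory[OF adm tr Y, of a] a by simp
  also have "\<dots> \<le> ereal \<tau>"
    using a(4) by simp
  finally have "\<zeta> \<bullet> (Y a - x) \<le> \<sigma> * (norm (Y a - x))\<^sup>2"
    by (rule proximal)
  also have "\<dots> \<le> \<sigma> * (2 * a * K)\<^sup>2"
    using near \<sigma>_nonneg by (intro mult_left_mono power_mono) auto
  finally have "a * (h - norm \<zeta> * L * (2 * a * K)) \<le> \<sigma> * (2 * a * K)\<^sup>2"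
    using inner_trajectory_increment_ge[OF adm tr _ _ aL] a(1) by fastforce
  then have "a * h \<le> a * (a * (4 * \<sigma> * K\<^sup>2 + 2 * norm \<zeta> * L * K))"
    by (simp add: power2_eq_square algebra_simps)
  then have "h \<le> a * (4 * \<sigma> * K\<^sup>2 + 2 * norm \<zeta> * L * K)"
    using a(1) by simp
  also have "\<dots> \<le> s * (4 * \<sigma> * K\<^sup>2 + 2 * norm \<zeta> * L * K)"
    using a(2) \<sigma>_nonneg K_nonneg L_nonneg by (intro mult_right_mono) auto
  finally show ?thesis .
qed

lemma min_hamiltonian_nonpos: "h \<le> 0"
proof (rule ccontr)
  assume "\<not> h \<le> 0"
  define B where "B = 4 * \<sigma> * K\<^sup>2 + 2 * norm \<zeta> * L * K"
  have "0 \<le> B"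
    unfolding B_def using \<sigma>_nonneg K_nonneg L_nonneg by simp
  define s where "s = min (1 / (2 * L + 2)) (h / (2 * B + 2))"
  have "0 < s"
    using \<open>\<not> h \<le> 0\<close> \<open>0 \<le> B\<close> L_nonneg by (simp add: s_def)
  have "s * (2 * L + 2) \<le> 1" "s * (2 * B + 2) \<le> h"
    using \<open>0 \<le> B\<close> L_nonneg by (simp_all add: s_def flip: pos_le_divide_eq)
  then have s: "0 < s" "s * L \<le> 1/2" "s * (2 * B + 2) \<le> h"
    using \<open>0 < s\<close> by (simp_all add: algebra_simps)
  have "h \<le> s * B"
    unfolding B_def by (rule min_hamiltonian_le_short_time[OF s(1,2)])
  moreover have "s * (2 * B + 2) = 2 * (s * B) + 2 * s" "0 \<le> s * B"
    using \<open>0 < s\<close> \<open>0 \<le> B\<close> by (simp_all add: algebra_simps)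
  ultimately show False
    using s by linarith
qed

definition C where "C = 2 * \<sigma> + 8 * \<sigma> * K\<^sup>2 + norm \<zeta> * L * (1 + 2 * K)"

lemma C_nonneg: "0 \<le> C"
  using \<sigma>_nonneg K_nonneg L_nonneg by (simp add: C_def)

lemma quadratic_remainder_bound_C:
  assumes "0 \<le> e" "0 \<le> s" "0 \<le> W" "W \<le> e + 2 * K * s"
  shows "\<sigma> * W\<^sup>2 + s * (norm \<zeta> * L * (e + 2 * K * s)) \<le> C * (e\<^sup>2 + s\<^sup>2)"
  using quadratic_remainder_bound[OF \<sigma>_nonneg _ _ assms(1,2,3), of "norm \<zeta> * L" "2 * K"] assms(4)
    K_nonneg L_nonneg
  by (simp add: C_def power_mult_distrib mult.assoc)

lemma epigraph_inequality_below:
  assumes Ty: "min_time f U y \<le> ereal \<beta>" and "\<beta> \<le> \<tau>" and y: "norm (y - x) \<le> 1"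
    and "(\<tau> - \<beta>) * L \<le> 1/2"
  shows "\<zeta> \<bullet> (y - x) + h * (\<beta> - \<tau>) \<le> C * ((norm (y - x))\<^sup>2 + (\<beta> - \<tau>)\<^sup>2)"
proof -
  obtain u0 where u0: "u0 \<in> U" "h = \<zeta> \<bullet> f x u0"
    by (rule min_hamiltonian_attained)
  define s where "s = \<tau> - \<beta>"
  have s: "0 \<le> s" "s * L \<le> 1/2"
    using assms by (simp_all add: s_def)
  obtain \<phi> where \<phi>_near: "\<And>r. r \<in> {0..s} \<Longrightarrow> norm (\<phi> r - y) \<le> 2 * s * norm (f y u0)"
    and int: "(\<lambda>\<rho>. f (\<phi> \<rho>) u0) integrable_on {0..s}"
    and y_eq: "y = \<phi> 0 + integral {0..s} (\<lambda>\<rho>. f (\<phi> \<rho>) u0)"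
    and T: "min_time f U (\<phi> 0) \<le> ereal (s + \<beta>)"
    using min_time_backward_step[OF u0(1) s Ty] by blast
  have \<phi>_x: "norm (\<phi> r - x) \<le> norm (y - x) + 2 * K * s" if "r \<in> {0..s}" for r
  proof -
    have "2 * s * norm (f y u0) \<le> 2 * K * s"
      using mult_left_mono[OF K_bound[OF y u0(1)], of "2 * s"] s(1) by (simp add: mult.commute)
    then show ?thesis
      using \<phi>_near[OF that] norm_triangle_ineq[of "\<phi> r - y" "y - x"] by simp
  qed
  have "\<zeta> \<bullet> integral {0..s} (\<lambda>\<rho>. f (\<phi> \<rho>) u0)
      \<le> (s - 0) * (h + norm \<zeta> * L * (norm (y - x) + 2 * K * s))"
  proof (rule inner_integral_le[OF int s(1)])
    fix r assume r: "r \<in> {0..s}"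
    have "norm \<zeta> * L * norm (\<phi> r - x) \<le> norm \<zeta> * L * (norm (y - x) + 2 * K * s)"
      using \<phi>_x[OF r] L_nonneg by (intro mult_left_mono) auto
    then show "\<zeta> \<bullet> f (\<phi> r) u0 \<le> h + norm \<zeta> * L * (norm (y - x) + 2 * K * s)"
      using inner_velocity_lipschitz[OF u0(1), of \<zeta> "\<phi> r" x] u0(2) by linarith
  qed
  moreover have "\<zeta> \<bullet> (\<phi> 0 - x) \<le> \<sigma> * (norm (\<phi> 0 - x))\<^sup>2"
    using T by (intro proximal) (simp add: s_def)
  moreover have "\<zeta> \<bullet> (y - x) + h * (\<beta> - \<tau>)
      = \<zeta> \<bullet> (\<phi> 0 - x) + \<zeta> \<bullet> integral {0..s} (\<lambda>\<rho>. f (\<phi> \<rho>) u0) - s * h"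
    by (subst y_eq) (simp add: s_def inner_simps algebra_simps)
  ultimately have "\<zeta> \<bullet> (y - x) + h * (\<beta> - \<tau>)
      \<le> \<sigma> * (norm (\<phi> 0 - x))\<^sup>2 + s * (norm \<zeta> * L * (norm (y - x) + 2 * K * s))"
    by (simp add: algebra_simps)
  also have "\<dots> \<le> C * ((norm (y - x))\<^sup>2 + s\<^sup>2)"
    using \<phi>_x[of 0] s(1) by (intro quadratic_remainder_bound_C) auto
  finally show ?thesis
    by (simp add: s_def power2_commute)
qed

lemma epigraph_inequality_forward:
  assumes Ty: "min_time f U y \<le> ereal \<beta>" and not_reached: "\<not> min_time f U y \<le> ereal \<tau>"
    and y: "norm (y - x) \<le> 1" and "\<beta> - \<tau> \<le> 1" "(\<beta> - \<tau>) * L \<le> 1/4"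
  shows "\<zeta> \<bullet> (y - x) + h * (\<beta> - \<tau>)
    \<le> C * (4 * ((norm (y - x))\<^sup>2 + (\<beta> - \<tau>)\<^sup>2)) - h * (\<beta> - \<tau>)\<^sup>2"
proof -
  define d where "d = \<beta> - \<tau>"
  define e where "e = norm (y - x)"
  have "\<tau> < \<beta>"
    using Ty not_reached by (meson ereal_less_eq(3) le_less_linear order.trans)
  then have d: "0 < d" "d\<^sup>2 \<le> d" "d * L \<le> 1/4"
    using assms by (auto simp: d_def power2_eq_square mult_le_cancel_left1)
  \<comment> \<open>Suboptimality of order \<open>d\<^sup>2\<close> keeps both \<open>s \<le> 2 d\<close> and the error \<open>h (d - s)\<close> quadratic.\<close>
  have "min_time f U y < ereal (\<beta> + d\<^sup>2)"
    by (rule order_le_less_trans[OF Ty]) (use d(1) in simp)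
  then obtain \<theta> u Y where \<theta>: "0 \<le> \<theta>" "\<theta> < \<beta> + d\<^sup>2" and adm: "admissible_control U u"
    and tr: "is_trajectory f y u Y" and Y: "Y \<theta> = 0"
    by (rule min_time_lessE)
  have "\<tau> < \<theta>"
    using not_reached min_time_le[OF adm tr \<theta>(1) Y] by (meson ereal_less_eq(3) le_less_linear order.trans)
  define s where "s = \<theta> - \<tau>"
  have "0 < s" "s \<le> 2 * d"
    using \<open>\<tau> < \<theta>\<close> \<theta>(2) d(2) by (auto simp: s_def d_def)
  moreover have "s * L \<le> 1/2"
    using mult_right_mono[OF \<open>s \<le> 2 * d\<close> L_nonneg] d(3) by simp
  ultimately have s: "0 < s" "s \<le> 2 * d" "s * L \<le> 1/2"
    by blast+
  have W: "norm (Y s - x) \<le> e + 2 * K * s"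
    using trajectory_near[OF adm tr y _ s(3), of s] s(1) by (simp add: e_def mult_ac)
  have "min_time f U (Y s) \<le> ereal (\<theta> - s)"
    using min_time_along_trajectory[OF adm tr Y, of s] s(1) \<tau>_nonneg by (simp add: s_def)
  then have "\<zeta> \<bullet> (Y s - x) \<le> \<sigma> * (norm (Y s - x))\<^sup>2"
    by (intro proximal) (simp add: s_def)
  moreover have "s * (h - norm \<zeta> * L * (e + 2 * K * s)) \<le> \<zeta> \<bullet> (Y s - y)"
    using inner_trajectory_increment_ge[OF adm tr y _ s(3)] s(1) by (simp add: e_def mult_ac)
  moreover have "h * (d - s) \<le> - h * d\<^sup>2"
  proof -
    have "- (d\<^sup>2) \<le> d - s"
      using \<theta>(2) by (simp add: s_def d_def)
    then show ?thesis
      using mult_left_mono_neg[OF _ min_hamiltonian_nonpos] by fastforce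
  qed
  moreover have "\<zeta> \<bullet> (y - x) = \<zeta> \<bullet> (Y s - x) - \<zeta> \<bullet> (Y s - y)"
    by (simp add: inner_diff_right)
  ultimately have "\<zeta> \<bullet> (y - x) + h * d
      \<le> \<sigma> * (norm (Y s - x))\<^sup>2 + s * (norm \<zeta> * L * (e + 2 * K * s)) - h * d\<^sup>2"
    by (simp add: algebra_simps)
  also have "\<dots> \<le> C * (e\<^sup>2 + s\<^sup>2) - h * d\<^sup>2"
    using W s(1) by (simp add: quadratic_remainder_bound_C e_def)
  also have "C * (e\<^sup>2 + s\<^sup>2) \<le> C * (4 * (e\<^sup>2 + d\<^sup>2))"
  proof (rule mult_left_mono[OF _ C_nonneg])
    have "s\<^sup>2 \<le> (2 * d)\<^sup>2"
      using s(1,2) by (intro power_mono) auto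
    then have "s\<^sup>2 \<le> 4 * d\<^sup>2"
      by (simp add: power_mult_distrib)
    then show "e\<^sup>2 + s\<^sup>2 \<le> 4 * (e\<^sup>2 + d\<^sup>2)"
      by (smt (verit) zero_le_power2)
  qed
  finally show ?thesis
    by (simp add: d_def e_def)
qed

lemma epigraph_inequality_above:
  assumes Ty: "min_time f U y \<le> ereal \<beta>" and "\<tau> < \<beta>" and y: "norm (y - x) \<le> 1"
    and "\<beta> - \<tau> \<le> 1" "(\<beta> - \<tau>) * L \<le> 1/4"
  shows "\<zeta> \<bullet> (y - x) + h * (\<beta> - \<tau>) \<le> (4 * C - h) * ((norm (y - x))\<^sup>2 + (\<beta> - \<tau>)\<^sup>2)"
proof -
  define n where "n = (norm (y - x))\<^sup>2 + (\<beta> - \<tau>)\<^sup>2"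
  have "\<zeta> \<bullet> (y - x) + h * (\<beta> - \<tau>) \<le> C * (4 * n) - h * (\<beta> - \<tau>)\<^sup>2"
  proof (cases "min_time f U y \<le> ereal \<tau>")
    case True
    have "\<sigma> \<le> C"
      using \<sigma>_nonneg K_nonneg L_nonneg by (simp add: C_def)
    then have "\<zeta> \<bullet> (y - x) \<le> C * (norm (y - x))\<^sup>2"
      using proximal[OF True] mult_right_mono[of \<sigma> C "(norm (y - x))\<^sup>2"] by simp
    moreover have "C * (norm (y - x))\<^sup>2 \<le> C * (4 * n)"
      using C_nonneg by (intro mult_left_mono) (auto simp: n_def)
    moreover have "h * (\<beta> - \<tau>) \<le> 0" "0 \<le> - h * (\<beta> - \<tau>)\<^sup>2"
      using \<open>\<tau> < \<beta>\<close> min_hamiltonian_nonpos by (simp_all add: mult_nonpos_nonneg)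
    ultimately show ?thesis
      by linarith
  next
    case False
    then show ?thesis
      using epigraph_inequality_forward[OF Ty False y assms(4,5)] by (simp add: n_def)
  qed
  also have "\<dots> \<le> (4 * C - h) * n"
    using mult_nonpos_nonneg[OF min_hamiltonian_nonpos, of "(norm (y - x))\<^sup>2"]
    by (simp add: n_def algebra_simps)
  finally show ?thesis
    by (simp add: n_def)
qed

lemma epigraph_inequality_near:
  assumes Ty: "min_time f U y \<le> ereal \<beta>" and y: "norm (y - x) \<le> 1"
    and "\<bar>\<beta> - \<tau>\<bar> \<le> 1" "\<bar>\<beta> - \<tau>\<bar> * L \<le> 1/4"
  shows "\<zeta> \<bullet> (y - x) + h * (\<beta> - \<tau>) \<le> (4 * C - h) * ((norm (y - x))\<^sup>2 + (\<beta> - \<tau>)\<^sup>2)"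
proof (cases "\<beta> \<le> \<tau>")
  case True
  then have "\<zeta> \<bullet> (y - x) + h * (\<beta> - \<tau>) \<le> C * ((norm (y - x))\<^sup>2 + (\<beta> - \<tau>)\<^sup>2)"
    using epigraph_inequality_below[OF Ty True y] assms(4) by simp
  also have "\<dots> \<le> (4 * C - h) * ((norm (y - x))\<^sup>2 + (\<beta> - \<tau>)\<^sup>2)"
    using C_nonneg min_hamiltonian_nonpos by (intro mult_right_mono) auto
  finally show ?thesis .
next
  case False
  then show ?thesis
    using epigraph_inequality_above[OF Ty _ y] assms(3,4) by simp
qed

theorem epigraph_proximal_normal: "(\<zeta>, h) \<in> proximal_normal (epigraph (min_time f U)) (x, \<tau>)"
proof -
  define \<delta> where "\<delta> = 1 / (4 * L + 4)"
  have "\<delta> * (4 * L + 4) = 1"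
    using L_nonneg by (simp add: \<delta>_def)
  then have \<delta>: "0 < \<delta>" "\<delta> \<le> 1" "\<delta> * L \<le> 1/4"
    using L_nonneg by (auto simp: \<delta>_def algebra_simps)
  show ?thesis
  proof (rule proximal_normalI_local[OF \<delta>(1), of "4 * C - h"])
    show "0 \<le> 4 * C - h"
      using C_nonneg min_hamiltonian_nonpos by simp
    fix p assume p: "p \<in> epigraph (min_time f U)" "norm (p - (x, \<tau>)) \<le> \<delta>"
    obtain y \<beta> where p_eq: "p = (y, \<beta>)"
      by (cases p)
    have near: "norm (y - x) \<le> \<delta>" "\<bar>\<beta> - \<tau>\<bar> \<le> \<delta>"
      using p(2) norm_fst_le[of "y - x" "\<beta> - \<tau>"] norm_snd_le[of "\<beta> - \<tau>" "y - x"]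
      by (simp_all add: p_eq)
    have "\<bar>\<beta> - \<tau>\<bar> * L \<le> 1/4"
      using mult_right_mono[OF near(2) L_nonneg] \<delta>(3) by simp
    then have "\<zeta> \<bullet> (y - x) + h * (\<beta> - \<tau>) \<le> (4 * C - h) * ((norm (y - x))\<^sup>2 + (\<beta> - \<tau>)\<^sup>2)"
      using p(1) near \<delta>(2) by (intro epigraph_inequality_near) (auto simp: p_eq epigraph_def)
    moreover have "(norm (p - (x, \<tau>)))\<^sup>2 = (norm (y - x))\<^sup>2 + (\<beta> - \<tau>)\<^sup>2"
      by (simp add: p_eq norm_Pair)
    ultimately show "(\<zeta>, h) \<bullet> (p - (x, \<tau>)) \<le> (4 * C - h) * (norm (p - (x, \<tau>)))\<^sup>2"
      by (simp add: p_eq)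
  qed
qed

end

text \<open>Only compactness of \<open>U\<close>, continuity and Lipschitz continuity of \<open>f\<close>, \<open>x \<noteq> 0\<close> and the
  finiteness of \<open>T(x)\<close> enter the proof.\<close>

theorem proposition3p1:
  fixes f :: "real ^ 'n \<Rightarrow> real ^ 'm \<Rightarrow> real ^ 'n"
    and U :: "(real ^ 'm) set"
    and Dxf :: "real ^ 'n \<Rightarrow> real ^ 'm \<Rightarrow> ((real ^ 'n) \<Rightarrow>\<^sub>L (real ^ 'n))"
    and L L1 :: real
    and x \<zeta> :: "real ^ 'n"
  assumes U_ne: "U \<noteq> {}" and U_compact: "compact U"
    and convex_vel: "\<forall>z. convex (f z ` U)"
    and f_cont: "continuous_on (UNIV \<times> U) (\<lambda>(z, u). f z u)"
    and L_pos: "L > 0"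
    and f_lip: "\<forall>z w u. u \<in> U \<longrightarrow> norm (f z u - f w u) \<le> L * norm (z - w)"
    and Dxf_deriv: "\<forall>z u. u \<in> U \<longrightarrow> ((\<lambda>w. f w u) has_derivative blinfun_apply (Dxf z u)) (at z)"
    and Dxf_cont: "continuous_on (UNIV \<times> U) (\<lambda>(z, u). Dxf z u)"
    and L1_pos: "L1 > 0"
    and Dxf_lip: "\<forall>z w u. u \<in> U \<longrightarrow> norm (Dxf z u - Dxf w u) \<le> L1 * norm (z - w)"
    and x_ne: "x \<noteq> 0"
    and nbhd: "\<exists>V. open V \<and> x \<in> V \<and>
       (\<forall>y\<in>V. min_time f U y \<noteq> \<infinity>) \<and>
       continuous_on V (\<lambda>y. real_of_ereal (min_time f U y)) \<and>
       (\<forall>y\<in>V. optimal_point f U y) \<and>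
       (\<forall>y\<in>V. \<exists>u. optimal_control f U y u \<and>
            bang_bang_on U (real_of_ereal (min_time f U y)) u \<and>
            (\<forall>v. optimal_control f U y v \<longrightarrow>
               (AE t in lborel. t \<in> {0..real_of_ereal (min_time f U y)} \<longrightarrow> v t = u t)))"
    and reach: "\<exists>r. ereal r > min_time f U x \<and>
       (\<forall>t. t < r \<longrightarrow> locally_positive_reach (reach_set f U (ereal t)))"
    and zeta: "\<zeta> \<in> proximal_normal (reach_set f U (min_time f U x)) x"
  shows "min_hamiltonian f U x \<zeta> \<le> 0 \<and>
    (\<zeta>, min_hamiltonian f U x \<zeta>) \<in>
      proximal_normal (epigraph (min_time f U)) (x, real_of_ereal (min_time f U x))"
proof -
  interpret control_system f U L
    using U_compact U_ne f_cont L_pos f_lip by unfold_locales auto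
  obtain \<tau> where Tx: "min_time f U x = ereal \<tau>"
    using nbhd min_time_nonneg[of f U x] by (cases "min_time f U x") auto
  obtain K where K: "0 \<le> K" "\<And>z u. norm (z - x) \<le> 1 \<Longrightarrow> u \<in> U \<Longrightarrow> norm (f z u) \<le> K"
    using velocity_bound[of x] by blast
  obtain \<sigma> where "0 \<le> \<sigma>"
    and "\<And>y. min_time f U y \<le> ereal \<tau> \<Longrightarrow> \<zeta> \<bullet> (y - x) \<le> \<sigma> * (norm (y - x))\<^sup>2"
    using zeta unfolding proximal_normal_def reach_set_def Tx by auto
  then interpret normal_to_reach_set f U L x \<zeta> \<tau> \<sigma> K
    using x_ne Tx K by unfold_locales auto
  show ?thesis
    using min_hamiltonian_nonpos epigraph_proximal_normal Tx by simp
qed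

end
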